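(* In the setting described in the context, let $(W^1,W^2)$ be a minimal pair of allocation states and suppose $y\in\mathcal X$ satisfies $W^1_y<\beta_y$. Then $W^1_{xy}=W^2_{xy}$ for all $x\in\mathcal X$.
   Context: $\mathcal X$ is a finite set of units, $\mathcal G=(\mathcal X,\mathcal E)$ a directed graph, $N_x=\{y:(x,y)\in\mathcal E\}$, $\alpha_x,\beta_x$ non-negative integers. An allocation state is a matrix $W\in\mathbb N^{\mathcal X\times\mathcal X}$ with $W_{xy}=0$ whenever $(x,y)\notin\mathcal E$, $W^x:=\sum_yW_{xy}=\alpha_x$ for all $x$, and $W_y:=\sum_xW_{xy}\le\beta_y$ for all $y$; $\mathcal W$ is the set of allocation states and $e_{xy}$ the matrix unit. Let $\mathcal L$ be the graph on $\mathcal W$ in which $W$ and $W'$ are adjacent iff $W'=W-e_{xy}+e_{xy'}$ for some $x$ and some $y\ne y'$ with $W_{xy}>0$, $y'\in N_x$, $W_{y'}<\beta_{y'}$ (these are exactly the positive-rate transitions of the paper's noisy best-response storage dynamics restricted to $\mathcal W$, under its standing assumption that unit activation rates are $\nu_x=\nu\alpha_x$ with $\nu>0$). Write $W\sim W'$ if $W,W'$ are connected by a path in $\mathcal L$. Let $\delta(W^1,W^2)=\sum_{x,y}|W^1_{xy}-W^2_{xy}|$. A pair $(W^1,W^2)$ in $\mathcal W$ is minimal if $\delta(W^1,W^2)\le\delta(W^{1'},W^{2'})$ for all $W^{1'}\sim W^1$ and all $W^{2'}\sim W^2$. *)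

theory Defs
  imports Main
begin

text \<open>Units form a finite type 'a (the finite set X). Matrices W : 'a => 'a => nat.
  E is the edge set of the directed graph, alpha/beta the integer parameters.\<close>

definition col_sum :: "('a::finite \<Rightarrow> 'a \<Rightarrow> nat) \<Rightarrow> 'a \<Rightarrow> nat" where
  "col_sum W y = (\<Sum>x\<in>UNIV. W x y)"

definition row_sum :: "('a::finite \<Rightarrow> 'a \<Rightarrow> nat) \<Rightarrow> 'a \<Rightarrow> nat" where
  "row_sum W x = (\<Sum>y\<in>UNIV. W x y)"

definition alloc_state ::
  "('a::finite \<times> 'a) set \<Rightarrow> ('a \<Rightarrow> nat) \<Rightarrow> ('a \<Rightarrow> nat) \<Rightarrow> ('a \<Rightarrow> 'a \<Rightarrow> nat) \<Rightarrow> bool" where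
  "alloc_state E \<alpha> \<beta> W \<longleftrightarrow>
     (\<forall>x y. (x, y) \<notin> E \<longrightarrow> W x y = 0) \<and>
     (\<forall>x. row_sum W x = \<alpha> x) \<and>
     (\<forall>y. col_sum W y \<le> \<beta> y)"

definition move :: "('a::finite \<times> 'a) set \<Rightarrow> ('a \<Rightarrow> nat)
    \<Rightarrow> ('a \<Rightarrow> 'a \<Rightarrow> nat) \<Rightarrow> ('a \<Rightarrow> 'a \<Rightarrow> nat) \<Rightarrow> bool" where
  "move E \<beta> W W' \<longleftrightarrow>
     (\<exists>x y y'. y \<noteq> y' \<and> W x y > 0 \<and> (x, y') \<in> E \<and> col_sum W y' < \<beta> y' \<and>
        W' = (\<lambda>a b. if a = x \<and> b = y then W a b - 1
                     else if a = x \<and> b = y' then W a b + 1 else W a b))"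

definition L_adj :: "('a::finite \<times> 'a) set \<Rightarrow> ('a \<Rightarrow> nat) \<Rightarrow> ('a \<Rightarrow> nat)
    \<Rightarrow> ('a \<Rightarrow> 'a \<Rightarrow> nat) \<Rightarrow> ('a \<Rightarrow> 'a \<Rightarrow> nat) \<Rightarrow> bool" where
  "L_adj E \<alpha> \<beta> W W' \<longleftrightarrow> alloc_state E \<alpha> \<beta> W \<and> alloc_state E \<alpha> \<beta> W' \<and>
     (move E \<beta> W W' \<or> move E \<beta> W' W)"

definition L_conn :: "('a::finite \<times> 'a) set \<Rightarrow> ('a \<Rightarrow> nat) \<Rightarrow> ('a \<Rightarrow> nat)
    \<Rightarrow> ('a \<Rightarrow> 'a \<Rightarrow> nat) \<Rightarrow> ('a \<Rightarrow> 'a \<Rightarrow> nat) \<Rightarrow> bool" where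
  "L_conn E \<alpha> \<beta> = (L_adj E \<alpha> \<beta>)\<^sup>*\<^sup>*"

definition dist_alloc :: "('a::finite \<Rightarrow> 'a \<Rightarrow> nat) \<Rightarrow> ('a \<Rightarrow> 'a \<Rightarrow> nat) \<Rightarrow> int" where
  "dist_alloc W1 W2 = (\<Sum>x\<in>UNIV. \<Sum>y\<in>UNIV. \<bar>int (W1 x y) - int (W2 x y)\<bar>)"

definition minimal_pair :: "('a::finite \<times> 'a) set \<Rightarrow> ('a \<Rightarrow> nat) \<Rightarrow> ('a \<Rightarrow> nat)
    \<Rightarrow> ('a \<Rightarrow> 'a \<Rightarrow> nat) \<Rightarrow> ('a \<Rightarrow> 'a \<Rightarrow> nat) \<Rightarrow> bool" where
  "minimal_pair E \<alpha> \<beta> W1 W2 \<longleftrightarrow>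
     alloc_state E \<alpha> \<beta> W1 \<and> alloc_state E \<alpha> \<beta> W2 \<and>
     (\<forall>W1' W2'. L_conn E \<alpha> \<beta> W1 W1' \<longrightarrow> L_conn E \<alpha> \<beta> W2 W2' \<longrightarrow>
        dist_alloc W1 W2 \<le> dist_alloc W1' W2')"

end

theory Submission
  imports Defs
begin

text \<open>Suppose some column y with free capacity in W1 differs between W1 and W2. If some
  W1 x y < W2 x y, then row x of W1 has the same total as in W2, so W1 has a surplus
  W1 x y' > W2 x y' elsewhere in that row; transferring one unit of x from y' to y is a legal
  move (y has free capacity) that strictly decreases the distance to W2, contradicting
  minimality. Otherwise W2 \<le> W1 on column y with strict inequality somewhere, so column y
  has free capacity in W2 as well, and the same argument moves W2 closer to W1.\<close>

definition transfer :: "('a \<Rightarrow> 'a \<Rightarrow> nat) \<Rightarrow> 'a \<Rightarrow> 'a \<Rightarrow> 'a \<Rightarrow> 'a \<Rightarrow> 'a \<Rightarrow> nat" where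
  "transfer W x y' y = (\<lambda>a b. if a = x \<and> b = y' then W a b - 1
                              else if a = x \<and> b = y then W a b + 1 else W a b)"

lemma transfer_add_indicator:
  assumes "y' \<noteq> y" and "0 < W x y'"
  shows "transfer W x y' y a b + (if a = x \<and> b = y' then 1 else 0)
           = W a b + (if a = x \<and> b = y then 1 else 0)"
  using assms unfolding transfer_def by auto

lemma row_sum_transfer:
  fixes W :: "'a::finite \<Rightarrow> 'a \<Rightarrow> nat"
  assumes "y' \<noteq> y" and "0 < W x y'"
  shows "row_sum (transfer W x y' y) a = row_sum W a"
proof -
  have "row_sum (transfer W x y' y) a + (\<Sum>b\<in>UNIV. if a = x \<and> b = y' then 1 else 0)
          = row_sum W a + (\<Sum>b\<in>UNIV. if a = x \<and> b = y then 1 else 0)"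
    unfolding row_sum_def sum.distrib[symmetric]
    using transfer_add_indicator[of y' y W x] assms by simp
  then show ?thesis by (cases "a = x") auto
qed

lemma col_sum_transfer:
  fixes W :: "'a::finite \<Rightarrow> 'a \<Rightarrow> nat"
  assumes "y' \<noteq> y" and "0 < W x y'"
  shows "col_sum (transfer W x y' y) b + (if b = y' then 1 else 0)
           = col_sum W b + (if b = y then 1 else 0)"
proof -
  have "col_sum (transfer W x y' y) b + (\<Sum>a\<in>UNIV. if a = x \<and> b = y' then 1 else 0)
          = col_sum W b + (\<Sum>a\<in>UNIV. if a = x \<and> b = y then 1 else 0)"
    unfolding col_sum_def sum.distrib[symmetric]
    using transfer_add_indicator[of y' y W x] assms by simp
  then show ?thesis by (cases "b = y"; cases "b = y'") auto
qed

lemma alloc_state_transfer: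
  assumes W: "alloc_state E \<alpha> \<beta> W"
    and "y' \<noteq> y" and "0 < W x y'" and "(x, y) \<in> E" and free: "col_sum W y < \<beta> y"
  shows "alloc_state E \<alpha> \<beta> (transfer W x y' y)"
proof -
  have "col_sum (transfer W x y' y) b \<le> \<beta> b" for b
  proof -
    have "col_sum W b \<le> \<beta> b" using W by (simp add: alloc_state_def)
    then show ?thesis
      using col_sum_transfer[of y' y W x b] assms(2,3) free by (cases "b = y") auto
  qed
  then show ?thesis
    using W assms(2-4) row_sum_transfer[of y' y W x]
    unfolding alloc_state_def transfer_def by auto
qed

lemma move_transfer:
  assumes "y' \<noteq> y" and "0 < W x y'" and "(x, y) \<in> E" and "col_sum W y < \<beta> y"
  shows "move E \<beta> W (transfer W x y' y)"
  unfolding move_def transfer_def using assms by blast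

lemma dist_alloc_transfer_less:
  assumes "B x y' < A x y'" and "A x y < B x y"
  shows "dist_alloc (transfer A x y' y) B < dist_alloc A B"
proof -
  let ?d = "\<lambda>C a b. \<bar>int (C a b) - int (B a b)\<bar>"
  have le: "?d (transfer A x y' y) a b \<le> ?d A a b" for a b
    using assms unfolding transfer_def by auto
  have less: "?d (transfer A x y' y) x y < ?d A x y"
    using assms unfolding transfer_def by auto
  have "(\<Sum>b\<in>UNIV. ?d (transfer A x y' y) x b) < (\<Sum>b\<in>UNIV. ?d A x b)"
    by (rule sum_strict_mono_ex1) (use le less in auto)
  then show ?thesis
    unfolding dist_alloc_def
    by (intro sum_strict_mono_ex1) (auto intro: sum_mono le)
qed

lemma dist_alloc_commute: "dist_alloc A B = dist_alloc B A"
  unfolding dist_alloc_def by (simp add: abs_minus_commute)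

lemma row_deficit_imp_surplus:
  fixes A B :: "'a::finite \<Rightarrow> 'a \<Rightarrow> nat"
  assumes "row_sum A x = row_sum B x" and "A x y < B x y"
  obtains y' where "B x y' < A x y'"
proof -
  have "\<not> (\<forall>y'. A x y' \<le> B x y')"
  proof
    assume "\<forall>y'. A x y' \<le> B x y'"
    then have "row_sum A x < row_sum B x"
      unfolding row_sum_def using assms(2) by (intro sum_strict_mono_ex1) auto
    with assms(1) show False by simp
  qed
  then show ?thesis using that by (auto simp: not_le)
qed

lemma exists_closer_neighbour:
  assumes A: "alloc_state E \<alpha> \<beta> A" and B: "alloc_state E \<alpha> \<beta> B"
    and free: "col_sum A y < \<beta> y" and less: "A x y < B x y"
  shows "\<exists>A'. L_adj E \<alpha> \<beta> A A' \<and> dist_alloc A' B < dist_alloc A B"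
proof -
  have "row_sum A x = row_sum B x"
    using A B by (simp add: alloc_state_def)
  then obtain y' where surplus: "B x y' < A x y'"
    using less by (rule row_deficit_imp_surplus)
  have "y' \<noteq> y" and pos: "0 < A x y'"
    using less surplus by auto
  have edge: "(x, y) \<in> E"
    using B less unfolding alloc_state_def by (metis less_nat_zero_code)
  note facts = \<open>y' \<noteq> y\<close> pos edge free
  have "L_adj E \<alpha> \<beta> A (transfer A x y' y)"
    unfolding L_adj_def
    using A alloc_state_transfer[of E \<alpha> \<beta> A y' y x] move_transfer[of y' y A x E \<beta>] facts
    by blast
  with dist_alloc_transfer_less[of B x y' A y] surplus less show ?thesis by blast
qed

lemma minimal_pair_dist_le_adj:
  assumes "minimal_pair E \<alpha> \<beta> W1 W2"
  shows "L_adj E \<alpha> \<beta> W1 W1' \<Longrightarrow> dist_alloc W1 W2 \<le> dist_alloc W1' W2"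
    and "L_adj E \<alpha> \<beta> W2 W2' \<Longrightarrow> dist_alloc W1 W2 \<le> dist_alloc W1 W2'"
  using assms unfolding minimal_pair_def L_conn_def
  by (meson r_into_rtranclp rtranclp.rtrancl_refl)+

theorem lemma3:
  fixes E :: "('a::finite \<times> 'a) set" and \<alpha> \<beta> :: "'a \<Rightarrow> nat"
    and W1 W2 :: "'a \<Rightarrow> 'a \<Rightarrow> nat" and y :: 'a
  assumes "minimal_pair E \<alpha> \<beta> W1 W2"
    and "col_sum W1 y < \<beta> y"
  shows "\<forall>x. W1 x y = W2 x y"
proof (rule ccontr)
  assume "\<not> (\<forall>x. W1 x y = W2 x y)"
  then obtain x where differ: "W1 x y \<noteq> W2 x y" by blast
  have W1: "alloc_state E \<alpha> \<beta> W1" and W2: "alloc_state E \<alpha> \<beta> W2"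
    using assms(1) by (auto simp: minimal_pair_def)
  note minimal = minimal_pair_dist_le_adj[OF assms(1)]
  show False
  proof (cases "\<exists>x. W1 x y < W2 x y")
    case True
    then obtain x where "W1 x y < W2 x y" by blast
    then show False
      using exists_closer_neighbour[OF W1 W2 assms(2)] minimal(1) by fastforce
  next
    case False
    then have "\<forall>x. W2 x y \<le> W1 x y" by (auto simp: not_less)
    with differ have less: "W2 x y < W1 x y" by (simp add: le_neq_implies_less)
    have "col_sum W2 y < col_sum W1 y"
      unfolding col_sum_def using \<open>\<forall>x. W2 x y \<le> W1 x y\<close> less
      by (intro sum_strict_mono_ex1) auto
    with assms(2) have "col_sum W2 y < \<beta> y" by simp
    then show False
      using exists_closer_neighbour[OF W2 W1 _ less] minimal(2) dist_alloc_commute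
      by (metis not_less)
  qed
qed

end
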